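(* Let $\mathbb{R}^n$ and $\mathbb{R}^m$ be equipped with arbitrary norms $\|\cdot\|$, with dual norms $\|\cdot\|_*$, and let $g:\mathbb{R}^n\to\mathbb{R}^m$, $y\in\mathbb{R}^m$, $\rho>0$, $L\ge 0$, $\mu>0$. Let $B=\{x\in\mathbb{R}^n:\|x\|\le\rho\}$. Assume: (A) $g(0)=0$, $g$ is differentiable in $B$, and $\|g'(x^a)-g'(x^b)\|\le L\|x^a-x^b\|$ for all $x^a,x^b\in B$; (B) for all $x\in B$ and all $h\in\mathbb{R}^m$, $\|g'(x)^T h\|_*\ge \mu\|h\|_*$; (C) $\|y\|<\mu\rho$. Then there exists a solution $x^*$ of $g(x)=y$ with $\|x^*\|\le \frac{\|y\|}{\mu}$.
   Context: For a vector $c$, the dual norm is $\|c\|_*=\sup_{\|x\|=1}(c,x)$. The norm of the matrix $g'(x)$ (a linear map $\mathbb{R}^n\to\mathbb{R}^m$) is the operator norm subordinate to the chosen vector norms on $\mathbb{R}^n$ and $\mathbb{R}^m$. *)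

theory Defs
  imports "HOL-Analysis.Analysis"
begin

definition is_norm :: "('a::real_vector \<Rightarrow> real) \<Rightarrow> bool" where
  "is_norm N \<longleftrightarrow>
     (\<forall>x. N x \<ge> 0) \<and> (\<forall>x. N x = 0 \<longleftrightarrow> x = 0) \<and>
     (\<forall>c x. N (c *\<^sub>R x) = \<bar>c\<bar> * N x) \<and>
     (\<forall>x y. N (x + y) \<le> N x + N y)"

definition dual_norm :: "('a::real_inner \<Rightarrow> real) \<Rightarrow> 'a \<Rightarrow> real" where
  "dual_norm N c = Sup {c \<bullet> x | x. N x = 1}"

definition op_norm :: "('a \<Rightarrow> real) \<Rightarrow> ('b \<Rightarrow> real) \<Rightarrow> ('a \<Rightarrow> 'b) \<Rightarrow> real" where
  "op_norm N1 N2 A = Sup {N2 (A x) | x. N1 x = 1}"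

end

theory Submission
  imports Defs "HOL-Analysis.Analysis"
begin

text \<open>Let \<Phi> x = N2 (g x - y). For \<epsilon> < \<mu> with N2 y < \<epsilon> \<rho>, Ekeland's variational principle
  (here a consequence of the compactness of the ball B) yields xb with N1 xb \<le> N2 y / \<epsilon> at which
  \<Phi> + \<epsilon> N1 (\<cdot> - xb) has a strict minimum over B. By (B), g' xb maps the ball of radius r / \<mu>
  onto a set containing the ball of radius r, so if g xb \<noteq> y, a small step towards a preimage of
  y - g xb would decrease \<Phi> faster than the penalty grows. Hence g xb = y, and letting \<epsilon> tend
  to \<mu> along a solution of minimal norm gives the bound N2 y / \<mu>.\<close>

lemma is_norm_nonneg: "is_norm N \<Longrightarrow> N x \<ge> 0"
  unfolding is_norm_def by auto

lemma is_norm_eq_0_iff: "is_norm N \<Longrightarrow> N x = 0 \<longleftrightarrow> x = 0"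
  unfolding is_norm_def by auto

lemma is_norm_zero: "is_norm N \<Longrightarrow> N 0 = 0"
  by (simp add: is_norm_eq_0_iff)

lemma is_norm_pos: "is_norm N \<Longrightarrow> x \<noteq> 0 \<Longrightarrow> N x > 0"
  using is_norm_nonneg is_norm_eq_0_iff by (metis order.not_eq_order_implies_strict)

lemma is_norm_scaleR: "is_norm N \<Longrightarrow> N (c *\<^sub>R x) = \<bar>c\<bar> * N x"
  unfolding is_norm_def by auto

lemma is_norm_triangle: "is_norm N \<Longrightarrow> N (x + y) \<le> N x + N y"
  unfolding is_norm_def by auto

lemma is_norm_minus: "is_norm N \<Longrightarrow> N (- x) = N x"
  using is_norm_scaleR[of N "-1" x] by simp

lemma is_norm_minus_commute: "is_norm N \<Longrightarrow> N (x - y) = N (y - x)"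
  using is_norm_minus[of N "x - y"] by simp

lemma is_norm_triangle_diff: "is_norm N \<Longrightarrow> N x \<le> N (x - y) + N y"
  using is_norm_triangle[of N "x - y" y] by simp

lemma is_norm_reverse_triangle: "is_norm N \<Longrightarrow> \<bar>N x - N y\<bar> \<le> N (x - y)"
  using is_norm_triangle_diff[of N x y] is_norm_triangle_diff[of N y x] is_norm_minus_commute[of N x y]
  by linarith

lemma is_norm_sum:
  assumes "is_norm N"
  shows "N (sum f A) \<le> (\<Sum>i\<in>A. N (f i))"
proof (induction A rule: infinite_finite_induct)
  case (insert a A)
  then show ?case using is_norm_triangle[OF assms, of "f a" "sum f A"] by simp
qed (simp_all add: is_norm_zero[OF assms])

lemma is_norm_le_norm:
  fixes N :: "'a::euclidean_space \<Rightarrow> real"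
  assumes "is_norm N"
  shows "\<exists>C>0. \<forall>x. N x \<le> C * norm x"
proof (intro exI allI conjI)
  let ?C = "(\<Sum>b\<in>Basis. N b) + 1"
  show "?C > 0" using assms by (simp add: add_nonneg_pos is_norm_nonneg sum_nonneg)
  fix x :: 'a
  have "N x = N (\<Sum>b\<in>Basis. (x \<bullet> b) *\<^sub>R b)" by (simp add: euclidean_representation)
  also have "\<dots> \<le> (\<Sum>b\<in>Basis. N ((x \<bullet> b) *\<^sub>R b))" by (rule is_norm_sum[OF assms])
  also have "\<dots> = (\<Sum>b\<in>Basis. \<bar>x \<bullet> b\<bar> * N b)" by (simp add: is_norm_scaleR[OF assms])
  also have "\<dots> \<le> (\<Sum>b\<in>Basis. norm x * N b)"
    by (intro sum_mono mult_right_mono) (auto simp: Basis_le_norm is_norm_nonneg[OF assms])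
  also have "\<dots> \<le> ?C * norm x" by (simp add: sum_distrib_left algebra_simps)
  finally show "N x \<le> ?C * norm x" .
qed

lemma continuous_on_is_norm:
  fixes N :: "'a::euclidean_space \<Rightarrow> real"
  assumes "is_norm N" and "continuous_on S f"
  shows "continuous_on S (\<lambda>x. N (f x))"
proof -
  obtain C where "C > 0" and C: "\<And>x. N x \<le> C * norm x"
    using is_norm_le_norm[OF assms(1)] by blast
  have "dist (N x) (N x') \<le> C * dist x x'" for x x'
    using is_norm_reverse_triangle[OF assms(1), of x x'] C[of "x - x'"] by (simp add: dist_norm)
  then have "C-lipschitz_on UNIV N" using \<open>C > 0\<close> by (intro lipschitz_onI) auto
  then have "continuous_on UNIV N" by (rule lipschitz_on_continuous_on)
  then show ?thesis using continuous_on_compose2[OF _ assms(2)] by blast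
qed

lemma is_norm_ge_norm:
  fixes N :: "'a::euclidean_space \<Rightarrow> real"
  assumes "is_norm N"
  shows "\<exists>c>0. \<forall>x. c * norm x \<le> N x"
proof -
  have "sphere (0::'a) 1 \<noteq> {}"
    using nonempty_Basis by (auto simp: norm_Basis)
  then obtain u where u: "u \<in> sphere 0 1" and umin: "\<And>x. x \<in> sphere 0 1 \<Longrightarrow> N u \<le> N x"
    using continuous_attains_inf[OF compact_sphere _ continuous_on_is_norm[OF assms continuous_on_id]] by blast
  have "N u * norm x \<le> N x" for x
  proof (cases "x = 0")
    case False
    have "N u \<le> N ((1 / norm x) *\<^sub>R x)" using umin[of "(1 / norm x) *\<^sub>R x"] False by simp
    also have "\<dots> = N x / norm x" using is_norm_scaleR[OF assms, of "1 / norm x" x] by simp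
    finally show ?thesis using False by (simp add: field_simps)
  qed (simp add: is_norm_nonneg[OF assms])
  moreover have "N u > 0" using u by (intro is_norm_pos[OF assms]) auto
  ultimately show ?thesis by blast
qed

lemma is_norm_exists_unit:
  fixes N :: "'a::euclidean_space \<Rightarrow> real"
  assumes "is_norm N"
  shows "\<exists>u. N u = 1"
proof -
  obtain b :: 'a where "b \<in> Basis" using nonempty_Basis by blast
  then have "N b > 0" by (intro is_norm_pos[OF assms]) (auto simp: nonzero_Basis)
  then have "N ((1 / N b) *\<^sub>R b) = 1" by (simp add: is_norm_scaleR[OF assms])
  then show ?thesis by blast
qed

lemma compact_is_norm_ball:
  fixes N :: "'a::euclidean_space \<Rightarrow> real"
  assumes "is_norm N"
  shows "compact {x. N x \<le> r}"
proof -
  obtain c where "c > 0" and c: "\<And>x. c * norm x \<le> N x" using is_norm_ge_norm[OF assms] by blast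
  have "bounded {x. N x \<le> r}" unfolding bounded_iff
    using c \<open>c > 0\<close> by (intro exI[of _ "r / c"]) (auto simp: field_simps intro: order_trans)
  moreover have "closed {x. N x \<le> r}"
    by (rule closed_Collect_le[OF continuous_on_is_norm[OF assms continuous_on_id] continuous_on_const])
  ultimately show ?thesis by (simp add: compact_eq_bounded_closed)
qed

lemma convex_is_norm_ball:
  assumes "is_norm N"
  shows "convex {x. N x \<le> r}"
proof (rule convexI, simp only: mem_Collect_eq)
  fix x y :: 'a and u v :: real
  assume "N x \<le> r" "N y \<le> r" "0 \<le> u" "0 \<le> v" "u + v = 1"
  then have "N (u *\<^sub>R x + v *\<^sub>R y) \<le> u * N x + v * N y"
    using is_norm_triangle[OF assms, of "u *\<^sub>R x" "v *\<^sub>R y"] by (simp add: is_norm_scaleR[OF assms])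
  also have "\<dots> \<le> u * r + v * r"
    using \<open>N x \<le> r\<close> \<open>N y \<le> r\<close> \<open>0 \<le> u\<close> \<open>0 \<le> v\<close> by (intro add_mono mult_left_mono)
  finally show "N (u *\<^sub>R x + v *\<^sub>R y) \<le> r" using \<open>u + v = 1\<close> by (simp add: distrib_right[symmetric])
qed

lemma bdd_above_dual_norm_set:
  fixes N :: "'a::euclidean_space \<Rightarrow> real"
  assumes "is_norm N"
  shows "bdd_above {c \<bullet> x | x. N x = 1}"
proof -
  obtain k where "k > 0" and k: "\<And>x. k * norm x \<le> N x" using is_norm_ge_norm[OF assms] by blast
  have "c \<bullet> x \<le> norm c / k" if "N x = 1" for x
  proof -
    have "norm x \<le> 1 / k" using k[of x] that \<open>k > 0\<close> by (simp add: field_simps)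
    then have "norm c * norm x \<le> norm c / k" by (simp add: mult_left_mono divide_inverse)
    then show ?thesis using norm_cauchy_schwarz[of c x] by linarith
  qed
  then show ?thesis unfolding bdd_above_def by blast
qed

lemma inner_le_dual_norm_unit:
  fixes N :: "'a::euclidean_space \<Rightarrow> real"
  assumes "is_norm N" and "N x = 1"
  shows "c \<bullet> x \<le> dual_norm N c"
  unfolding dual_norm_def by (rule cSup_upper[OF _ bdd_above_dual_norm_set[OF assms(1)]]) (use assms(2) in blast)

lemma inner_le_dual_norm:
  fixes N :: "'a::euclidean_space \<Rightarrow> real"
  assumes "is_norm N"
  shows "c \<bullet> x \<le> N x * dual_norm N c"
proof (cases "x = 0")
  case False
  then have "N x > 0" by (rule is_norm_pos[OF assms])
  then have "N ((1 / N x) *\<^sub>R x) = 1" by (simp add: is_norm_scaleR[OF assms])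
  then have "c \<bullet> ((1 / N x) *\<^sub>R x) \<le> dual_norm N c" by (rule inner_le_dual_norm_unit[OF assms])
  then show ?thesis using \<open>N x > 0\<close> by (simp add: field_simps)
qed (simp add: is_norm_zero[OF assms])

lemma dual_norm_le:
  fixes N :: "'a::euclidean_space \<Rightarrow> real"
  assumes "is_norm N" and "\<And>x. N x = 1 \<Longrightarrow> c \<bullet> x \<le> B"
  shows "dual_norm N c \<le> B"
  unfolding dual_norm_def
  using is_norm_exists_unit[OF assms(1)] assms(2) by (intro cSup_least) auto

lemma inner_transpose_matrix:
  fixes A :: "real^'n \<Rightarrow> real^'m"
  assumes "linear A"
  shows "(transpose (matrix A) *v h) \<bullet> x = h \<bullet> A x"
  using dot_lmul_matrix[of h "matrix A" x] matrix_works[of A x] assms by simp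

text \<open>Dual regularity of a linear map makes it open with a quantitative bound: if some z had no
  preimage in the ball of radius N2 z / \<mu>, a hyperplane separating z from the (convex, compact)
  image of that ball would give a functional h violating the regularity estimate.\<close>
lemma linear_exists_preimage_le:
  fixes A :: "real^'n \<Rightarrow> real^'m" and N1 :: "real^'n \<Rightarrow> real" and N2 :: "real^'m \<Rightarrow> real"
  assumes N1: "is_norm N1" and N2: "is_norm N2" and lin: "linear A" and "\<mu> > 0"
    and reg: "\<And>h. \<mu> * dual_norm N2 h \<le> dual_norm N1 (transpose (matrix A) *v h)"
  shows "\<exists>v. A v = z \<and> N1 v \<le> N2 z / \<mu>"
proof (cases "z = 0")
  case True
  then show ?thesis using linear_0[OF lin] is_norm_zero[OF N1] is_norm_zero[OF N2] by auto
next
  case False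
  define r where "r = N2 z / \<mu>"
  have "r > 0" unfolding r_def using is_norm_pos[OF N2 False] \<open>\<mu> > 0\<close> by simp
  define K where "K = A ` {v. N1 v \<le> r}"
  have "convex K" unfolding K_def by (rule convex_linear_image[OF lin convex_is_norm_ball[OF N1]])
  have "closed K" unfolding K_def
    using lin linear_continuous_on[of A] compact_is_norm_ball[OF N1]
    by (intro compact_imp_closed compact_continuous_image) (auto simp: linear_conv_bounded_linear)
  have "z \<in> K"
  proof (rule ccontr)
    assume "z \<notin> K"
    then obtain a b where "a \<bullet> z < b" and ab: "\<And>x. x \<in> K \<Longrightarrow> b < a \<bullet> x"
      using separating_hyperplane_closed_point[OF \<open>convex K\<close> \<open>closed K\<close>] by blast
    have "dual_norm N1 (transpose (matrix A) *v (- a)) \<le> - b / r"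
    proof (rule dual_norm_le[OF N1])
      fix x assume "N1 x = 1"
      then have "A (r *\<^sub>R x) \<in> K" unfolding K_def using \<open>r > 0\<close> by (auto simp: is_norm_scaleR[OF N1])
      then have "b < a \<bullet> A (r *\<^sub>R x)" by (rule ab)
      then have "b < r * (a \<bullet> A x)" by (simp add: linear_scale[OF lin])
      then show "(transpose (matrix A) *v (- a)) \<bullet> x \<le> - b / r"
        unfolding inner_transpose_matrix[OF lin] using \<open>r > 0\<close> by (simp add: field_simps)
    qed
    then have "r * dual_norm N1 (transpose (matrix A) *v (- a)) \<le> - b"
      using \<open>r > 0\<close> by (simp add: field_simps)
    moreover have "r * (\<mu> * dual_norm N2 (- a)) \<le> r * dual_norm N1 (transpose (matrix A) *v (- a))"
      using reg \<open>r > 0\<close> by (simp add: mult_left_mono)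
    ultimately have "r * (\<mu> * dual_norm N2 (- a)) \<le> - b" by linarith
    moreover have "- a \<bullet> z \<le> r * (\<mu> * dual_norm N2 (- a))"
      using inner_le_dual_norm[OF N2, of "- a" z] \<open>\<mu> > 0\<close> by (simp add: r_def)
    ultimately show False using \<open>a \<bullet> z < b\<close> by simp
  qed
  then show ?thesis unfolding K_def r_def by blast
qed

lemma ekeland_compact:
  fixes N :: "'a::euclidean_space \<Rightarrow> real"
  assumes N: "is_norm N" and "compact B" and cont: "continuous_on B \<Phi>" and "x0 \<in> B" and "\<epsilon> > 0"
  obtains xb where "xb \<in> B" and "\<Phi> xb + \<epsilon> * N (xb - x0) \<le> \<Phi> x0"
    and "\<And>x. x \<in> B \<Longrightarrow> x \<noteq> xb \<Longrightarrow> \<Phi> xb < \<Phi> x + \<epsilon> * N (x - xb)"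
proof -
  define F where "F x = \<Phi> x + \<epsilon> * N (x - x0)" for x
  define S where "S = B \<inter> F -` {..\<Phi> x0}"
  have "continuous_on B F"
    unfolding F_def
    by (intro continuous_on_add cont continuous_on_mult_left continuous_on_is_norm[OF N]
        continuous_on_diff continuous_on_id continuous_on_const)
  then have "closed S"
    unfolding S_def using \<open>compact B\<close> by (intro continuous_closed_preimage) (auto intro: compact_imp_closed)
  then have "compact (B \<inter> S)" using \<open>compact B\<close> by (rule compact_Int_closed[rotated])
  then have "compact S" by (simp add: S_def)
  moreover have "S \<noteq> {}" using \<open>x0 \<in> B\<close> by (auto simp: S_def F_def is_norm_zero[OF N])
  moreover have "continuous_on S \<Phi>" using cont by (rule continuous_on_subset) (simp add: S_def)
  ultimately obtain xb where "xb \<in> S" and xb_min: "\<And>x. x \<in> S \<Longrightarrow> \<Phi> xb \<le> \<Phi> x"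
    using continuous_attains_inf by metis
  have "\<Phi> xb < \<Phi> x + \<epsilon> * N (x - xb)" if "x \<in> B" "x \<noteq> xb" for x
  proof (rule ccontr)
    assume le: "\<not> ?thesis"
    have tri: "N (x - x0) \<le> N (x - xb) + N (xb - x0)"
      using is_norm_triangle[OF N, of "x - xb" "xb - x0"] by simp
    have "F x \<le> \<Phi> x + \<epsilon> * N (x - xb) + \<epsilon> * N (xb - x0)"
      using mult_left_mono[OF tri, of \<epsilon>] \<open>\<epsilon> > 0\<close> by (simp add: F_def distrib_left)
    also have "\<dots> \<le> F xb" using le by (simp add: F_def)
    also have "F xb \<le> \<Phi> x0" using \<open>xb \<in> S\<close> by (simp add: S_def)
    finally have "x \<in> S" using \<open>x \<in> B\<close> by (simp add: S_def)
    then have "\<Phi> xb \<le> \<Phi> x" by (rule xb_min)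
    moreover have "\<epsilon> * N (x - xb) > 0" using \<open>x \<noteq> xb\<close> \<open>\<epsilon> > 0\<close> by (simp add: is_norm_pos[OF N])
    ultimately show False using le by linarith
  qed
  moreover have "xb \<in> B" "\<Phi> xb + \<epsilon> * N (xb - x0) \<le> \<Phi> x0" using \<open>xb \<in> S\<close> by (simp_all add: S_def F_def)
  ultimately show ?thesis using that by blast
qed

lemma has_derivative_is_norm_remainder:
  fixes f :: "'a::euclidean_space \<Rightarrow> 'b::euclidean_space"
  assumes N1: "is_norm N1" and N2: "is_norm N2"
    and deriv: "(f has_derivative f') (at x)" and "\<eta> > 0"
  obtains d where "d > 0"
    and "\<And>x'. N1 (x' - x) < d \<Longrightarrow> N2 (f x' - f x - f' (x' - x)) \<le> \<eta> * N1 (x' - x)"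
proof -
  obtain C where "C > 0" and C: "\<And>u. N2 u \<le> C * norm u" using is_norm_le_norm[OF N2] by blast
  obtain c where "c > 0" and c: "\<And>u. c * norm u \<le> N1 u" using is_norm_ge_norm[OF N1] by blast
  have "\<eta> * c / C > 0" using \<open>\<eta> > 0\<close> \<open>c > 0\<close> \<open>C > 0\<close> by simp
  then obtain d where "d > 0"
    and d: "\<And>x'. norm (x' - x) < d \<Longrightarrow> norm (f x' - f x - f' (x' - x)) \<le> (\<eta> * c / C) * norm (x' - x)"
    using deriv unfolding has_derivative_at_alt by blast
  have "N2 (f x' - f x - f' (x' - x)) \<le> \<eta> * N1 (x' - x)" if "N1 (x' - x) < c * d" for x'
  proof -
    have "c * norm (x' - x) < c * d" using c[of "x' - x"] that by linarith
    then have "norm (x' - x) < d" using \<open>c > 0\<close> by simp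
    then have "C * norm (f x' - f x - f' (x' - x)) \<le> \<eta> * (c * norm (x' - x))"
      using d[of x'] \<open>C > 0\<close> by (simp add: field_simps)
    also have "\<dots> \<le> \<eta> * N1 (x' - x)" using c[of "x' - x"] \<open>\<eta> > 0\<close> by simp
    finally show ?thesis using C[of "f x' - f x - f' (x' - x)"] by linarith
  qed
  moreover have "c * d > 0" using \<open>c > 0\<close> \<open>d > 0\<close> by simp
  ultimately show ?thesis using that by blast
qed

lemma residual_along_preimage_direction:
  fixes g :: "'a::euclidean_space \<Rightarrow> 'b::euclidean_space"
  assumes N1: "is_norm N1" and N2: "is_norm N2"
    and deriv: "(g has_derivative A) (at x)" and dir: "A v = y - g x" and "\<eta> > 0"
  obtains t0 where "0 < t0" "t0 \<le> 1"
    "\<And>t. 0 < t \<Longrightarrow> t \<le> t0 \<Longrightarrow> N2 (g (x + t *\<^sub>R v) - y) \<le> (1 - t) * N2 (y - g x) + \<eta> * (t * N1 v)"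
proof -
  have lin: "linear A" using deriv by (rule has_derivative_linear)
  obtain d where "d > 0"
    and d: "\<And>x'. N1 (x' - x) < d \<Longrightarrow> N2 (g x' - g x - A (x' - x)) \<le> \<eta> * N1 (x' - x)"
    using has_derivative_is_norm_remainder[OF N1 N2 deriv \<open>\<eta> > 0\<close>] by blast
  define t0 where "t0 = min 1 (d / (N1 v + 1))"
  have "N1 v \<ge> 0" by (rule is_norm_nonneg[OF N1])
  then have "0 < t0" "t0 \<le> 1" "t0 * N1 v < d"
    using \<open>d > 0\<close> by (auto simp: t0_def min_def field_simps)
  have "N2 (g (x + t *\<^sub>R v) - y) \<le> (1 - t) * N2 (y - g x) + \<eta> * (t * N1 v)"
    if "0 < t" "t \<le> t0" for t
  proof -
    have "t * N1 v \<le> t0 * N1 v" using \<open>t \<le> t0\<close> \<open>N1 v \<ge> 0\<close> by (rule mult_right_mono)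
    then have "N1 (t *\<^sub>R v) < d" using \<open>t0 * N1 v < d\<close> \<open>0 < t\<close> by (simp add: is_norm_scaleR[OF N1])
    then have remainder: "N2 (g (x + t *\<^sub>R v) - g x - A (t *\<^sub>R v)) \<le> \<eta> * (t * N1 v)"
      using d[of "x + t *\<^sub>R v"] \<open>0 < t\<close> by (simp add: is_norm_scaleR[OF N1])
    have "g (x + t *\<^sub>R v) - y = (g (x + t *\<^sub>R v) - g x - A (t *\<^sub>R v)) + (1 - t) *\<^sub>R (g x - y)"
      by (simp add: linear_scale[OF lin] dir algebra_simps)
    then have "N2 (g (x + t *\<^sub>R v) - y)
        \<le> N2 (g (x + t *\<^sub>R v) - g x - A (t *\<^sub>R v)) + N2 ((1 - t) *\<^sub>R (g x - y))"
      by (simp only: is_norm_triangle[OF N2])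
    moreover have "N2 ((1 - t) *\<^sub>R (g x - y)) = (1 - t) * N2 (y - g x)"
      using \<open>t \<le> t0\<close> \<open>t0 \<le> 1\<close> by (simp add: is_norm_scaleR[OF N2] is_norm_minus_commute[OF N2])
    ultimately show ?thesis using remainder by linarith
  qed
  with \<open>0 < t0\<close> \<open>t0 \<le> 1\<close> show ?thesis using that by blast
qed

lemma exists_descent_step:
  fixes g :: "'a::euclidean_space \<Rightarrow> 'b::euclidean_space"
  assumes N1: "is_norm N1" and N2: "is_norm N2"
    and deriv: "(g has_derivative A) (at x)"
    and preimage: "A v = y - g x" "N1 v \<le> N2 (y - g x) / \<mu>"
    and "0 \<le> \<epsilon>" "\<epsilon> < \<mu>" "g x \<noteq> y" "\<delta> > 0"
  obtains x' where "x' \<noteq> x" "N1 (x' - x) \<le> \<delta>"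
    "N2 (g x' - y) + \<epsilon> * N1 (x' - x) \<le> N2 (g x - y)"
proof -
  define r where "r = N2 (y - g x)"
  define p where "p = N1 v"
  have "r > 0" using \<open>g x \<noteq> y\<close> by (simp add: r_def is_norm_pos[OF N2])
  have "v \<noteq> 0" using preimage(1) \<open>g x \<noteq> y\<close> linear_0[OF has_derivative_linear[OF deriv]] by auto
  then have "p > 0" unfolding p_def by (rule is_norm_pos[OF N1])
  have "\<epsilon> * p \<le> \<epsilon> * (r / \<mu>)"
    using mult_left_mono[OF preimage(2) \<open>0 \<le> \<epsilon>\<close>] by (simp add: p_def r_def)
  also have "\<dots> < r" using \<open>0 \<le> \<epsilon>\<close> \<open>\<epsilon> < \<mu>\<close> \<open>r > 0\<close> by (simp add: field_simps)
  finally have "(r - \<epsilon> * p) / p > 0" using \<open>p > 0\<close> by simp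
  then obtain t0 where "0 < t0" "t0 \<le> 1"
    and t0: "\<And>t. 0 < t \<Longrightarrow> t \<le> t0 \<Longrightarrow> N2 (g (x + t *\<^sub>R v) - y) \<le> (1 - t) * r + (r - \<epsilon> * p) / p * (t * p)"
    using residual_along_preimage_direction[OF N1 N2 deriv preimage(1)] unfolding r_def p_def by blast
  define t where "t = min t0 (\<delta> / p)"
  have "0 < t" "t \<le> t0" "t * p \<le> \<delta>"
    using \<open>0 < t0\<close> \<open>p > 0\<close> \<open>\<delta> > 0\<close> by (auto simp: t_def min_def field_simps)
  have step: "N1 (t *\<^sub>R v) = t * p" using \<open>0 < t\<close> by (simp add: p_def is_norm_scaleR[OF N1])
  have "N2 (g (x + t *\<^sub>R v) - y) \<le> (1 - t) * r + (r - \<epsilon> * p) / p * (t * p)"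
    using t0 \<open>0 < t\<close> \<open>t \<le> t0\<close> by blast
  also have "\<dots> = r - \<epsilon> * (t * p)" using \<open>p > 0\<close> by (simp add: field_simps)
  finally have "N2 (g (x + t *\<^sub>R v) - y) + \<epsilon> * N1 (t *\<^sub>R v) \<le> N2 (g x - y)"
    by (simp add: step r_def is_norm_minus_commute[OF N2, of y])
  moreover have "t *\<^sub>R v \<noteq> 0" using \<open>0 < t\<close> \<open>v \<noteq> 0\<close> by simp
  ultimately show ?thesis using that[of "x + t *\<^sub>R v"] step \<open>t * p \<le> \<delta>\<close> by simp
qed

lemma exists_solution_norm_le:
  fixes g :: "'a::euclidean_space \<Rightarrow> 'b::euclidean_space"
  assumes N1: "is_norm N1" and N2: "is_norm N2" and "g 0 = 0"
    and deriv: "\<And>x. N1 x \<le> \<rho> \<Longrightarrow> (g has_derivative g' x) (at x)"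
    and preimage: "\<And>x z. N1 x \<le> \<rho> \<Longrightarrow> \<exists>v. g' x v = z \<and> N1 v \<le> N2 z / \<mu>"
    and "0 < \<epsilon>" "\<epsilon> < \<mu>" "N2 y < \<epsilon> * \<rho>"
  obtains x where "N1 x \<le> \<rho>" "g x = y" "N1 x \<le> N2 y / \<epsilon>"
proof -
  define B where "B = {x. N1 x \<le> \<rho>}"
  have "N2 y / \<epsilon> < \<rho>" using \<open>N2 y < \<epsilon> * \<rho>\<close> \<open>0 < \<epsilon>\<close> by (simp add: field_simps)
  moreover have "0 \<le> N2 y / \<epsilon>" using is_norm_nonneg[OF N2, of y] \<open>0 < \<epsilon>\<close> by simp
  ultimately have "0 \<in> B" by (simp add: B_def is_norm_zero[OF N1])
  have "compact B" unfolding B_def by (rule compact_is_norm_ball[OF N1])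
  have "continuous_on B g"
    by (rule continuous_at_imp_continuous_on) (auto simp: B_def intro: has_derivative_continuous[OF deriv])
  then have cont: "continuous_on B (\<lambda>x. N2 (g x - y))"
    by (rule continuous_on_is_norm[OF N2 continuous_on_diff[OF _ continuous_on_const]])
  obtain xb where "xb \<in> B" and xb: "N2 (g xb - y) + \<epsilon> * N1 (xb - 0) \<le> N2 (g 0 - y)"
    and xb_strict: "\<And>x. x \<in> B \<Longrightarrow> x \<noteq> xb \<Longrightarrow> N2 (g xb - y) < N2 (g x - y) + \<epsilon> * N1 (x - xb)"
    by (rule ekeland_compact[OF N1 \<open>compact B\<close> cont \<open>0 \<in> B\<close> \<open>0 < \<epsilon>\<close>]) iprover
  have "\<epsilon> * N1 xb \<le> N2 y"
    using xb is_norm_nonneg[OF N2, of "g xb - y"] by (simp add: \<open>g 0 = 0\<close> is_norm_minus[OF N2])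
  then have "N1 xb \<le> N2 y / \<epsilon>" using \<open>0 < \<epsilon>\<close> by (simp add: field_simps)
  moreover have "g xb = y"
  proof (rule ccontr)
    assume "g xb \<noteq> y"
    have "N1 xb < \<rho>" using \<open>N1 xb \<le> N2 y / \<epsilon>\<close> \<open>N2 y / \<epsilon> < \<rho>\<close> by linarith
    then have xb_deriv: "(g has_derivative g' xb) (at xb)" by (simp add: deriv)
    obtain v where v: "g' xb v = y - g xb" "N1 v \<le> N2 (y - g xb) / \<mu>"
      using preimage[OF less_imp_le[OF \<open>N1 xb < \<rho>\<close>]] by blast
    have "\<rho> - N1 xb > 0" using \<open>N1 xb < \<rho>\<close> by simp
    then obtain x where "x \<noteq> xb" "N1 (x - xb) \<le> \<rho> - N1 xb"
      and descent: "N2 (g x - y) + \<epsilon> * N1 (x - xb) \<le> N2 (g xb - y)"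
      by (rule exists_descent_step[OF N1 N2 xb_deriv v less_imp_le[OF \<open>0 < \<epsilon>\<close>] \<open>\<epsilon> < \<mu>\<close> \<open>g xb \<noteq> y\<close>])
    then have "x \<in> B" using is_norm_triangle_diff[OF N1, of x xb] by (simp add: B_def)
    then have "N2 (g xb - y) < N2 (g x - y) + \<epsilon> * N1 (x - xb)" using \<open>x \<noteq> xb\<close> by (rule xb_strict)
    with descent show False by linarith
  qed
  ultimately show ?thesis using that \<open>xb \<in> B\<close> unfolding B_def by blast
qed

lemma exists_min_norm_solution:
  fixes N :: "'a::euclidean_space \<Rightarrow> real" and g :: "'a \<Rightarrow> 'b::t1_space"
  assumes N: "is_norm N" and cont: "continuous_on {x. N x \<le> \<rho>} g"
    and "N x0 \<le> \<rho>" "g x0 = y"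
  obtains xm where "N xm \<le> \<rho>" "g xm = y" "\<And>x. N x \<le> \<rho> \<Longrightarrow> g x = y \<Longrightarrow> N xm \<le> N x"
proof -
  define B where "B = {x. N x \<le> \<rho>}"
  define T where "T = {x \<in> B. g x = y}"
  have "compact B" unfolding B_def by (rule compact_is_norm_ball[OF N])
  have "closed T"
    unfolding T_def using cont \<open>compact B\<close>
    by (intro continuous_closed_preimage_constant compact_imp_closed) (simp_all add: B_def)
  then have "compact (B \<inter> T)" using \<open>compact B\<close> by (rule compact_Int_closed[rotated])
  moreover have "B \<inter> T = T" by (auto simp: T_def)
  ultimately have "compact T" by simp
  moreover have "T \<noteq> {}" using assms(3,4) by (auto simp: T_def B_def)
  ultimately obtain xm where "xm \<in> T" and "\<forall>x\<in>T. N xm \<le> N x"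
    using continuous_attains_inf[OF _ _ continuous_on_is_norm[OF N continuous_on_id]] by blast
  then show ?thesis by (intro that) (auto simp: T_def B_def)
qed

lemma le_divide_of_le_divide_below:
  fixes a b \<epsilon>0 \<mu> :: real
  assumes "\<epsilon>0 < \<mu>" "\<mu> \<noteq> 0" and "\<And>\<epsilon>. \<epsilon>0 < \<epsilon> \<Longrightarrow> \<epsilon> < \<mu> \<Longrightarrow> a \<le> b / \<epsilon>"
  shows "a \<le> b / \<mu>"
proof (rule tendsto_le[OF trivial_limit_at_left_real])
  show "((\<lambda>\<epsilon>. b / \<epsilon>) \<longlongrightarrow> b / \<mu>) (at_left \<mu>)"
    using \<open>\<mu> \<noteq> 0\<close> by (intro tendsto_divide tendsto_const tendsto_ident_at)
  show "((\<lambda>\<epsilon>. a) \<longlongrightarrow> a) (at_left \<mu>)" by simp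
  show "\<forall>\<^sub>F \<epsilon> in at_left \<mu>. a \<le> b / \<epsilon>"
    using eventually_at_left_real[OF \<open>\<epsilon>0 < \<mu>\<close>] by eventually_elim (use assms(3) in auto)
qed

theorem theorem1:
  fixes N1 :: "real^'n \<Rightarrow> real" and N2 :: "real^'m \<Rightarrow> real"
    and g :: "real^'n \<Rightarrow> real^'m" and g' :: "real^'n \<Rightarrow> real^'n \<Rightarrow> real^'m"
    and y :: "real^'m" and \<rho> L \<mu> :: real
  assumes N1: "is_norm N1" and N2: "is_norm N2"
    and rho: "\<rho> > 0" and L: "L \<ge> 0" and mu: "\<mu> > 0"
    and g0: "g 0 = 0"
    and deriv: "\<And>x. N1 x \<le> \<rho> \<Longrightarrow> (g has_derivative g' x) (at x)"
    and lip: "\<And>xa xb. N1 xa \<le> \<rho> \<Longrightarrow> N1 xb \<le> \<rho> \<Longrightarrow>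
                op_norm N1 N2 (\<lambda>v. g' xa v - g' xb v) \<le> L * N1 (xa - xb)"
    and reg: "\<And>x h. N1 x \<le> \<rho> \<Longrightarrow>
                dual_norm N1 (transpose (matrix (g' x)) *v h) \<ge> \<mu> * dual_norm N2 h"
    and ysmall: "N2 y < \<mu> * \<rho>"
  shows "\<exists>xs. g xs = y \<and> N1 xs \<le> N2 y / \<mu>"
proof -
  have preimage: "\<exists>v. g' x v = z \<and> N1 v \<le> N2 z / \<mu>" if "N1 x \<le> \<rho>" for x z
    using linear_exists_preimage_le[OF N1 N2 has_derivative_linear[OF deriv[OF that]] mu] reg[OF that] by blast
  define \<epsilon>0 where "\<epsilon>0 = N2 y / \<rho>"
  have "0 \<le> \<epsilon>0" "\<epsilon>0 < \<mu>"
    using is_norm_nonneg[OF N2, of y] rho ysmall by (simp_all add: \<epsilon>0_def field_simps)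
  have solution: "\<exists>x. N1 x \<le> \<rho> \<and> g x = y \<and> N1 x \<le> N2 y / \<epsilon>" if "\<epsilon>0 < \<epsilon>" "\<epsilon> < \<mu>" for \<epsilon>
  proof -
    have "0 < \<epsilon>" using that(1) \<open>0 \<le> \<epsilon>0\<close> by linarith
    moreover have "N2 y < \<epsilon> * \<rho>" using that(1) rho by (simp add: \<epsilon>0_def field_simps)
    ultimately show ?thesis using exists_solution_norm_le[OF N1 N2 g0 deriv preimage] \<open>\<epsilon> < \<mu>\<close> by metis
  qed
  have cont: "continuous_on {x. N1 x \<le> \<rho>} g"
    by (rule continuous_at_imp_continuous_on) (auto intro: has_derivative_continuous[OF deriv])
  have "\<epsilon>0 < (\<epsilon>0 + \<mu>) / 2" "(\<epsilon>0 + \<mu>) / 2 < \<mu>" using \<open>\<epsilon>0 < \<mu>\<close> by simp_all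
  then obtain x0 where x0: "N1 x0 \<le> \<rho>" "g x0 = y" using solution by blast
  obtain xm where "g xm = y" and xm_min: "\<And>x. N1 x \<le> \<rho> \<Longrightarrow> g x = y \<Longrightarrow> N1 xm \<le> N1 x"
    using exists_min_norm_solution[OF N1 cont x0] by metis
  have bound: "N1 xm \<le> N2 y / \<epsilon>" if "\<epsilon>0 < \<epsilon>" "\<epsilon> < \<mu>" for \<epsilon>
    using solution[OF that] xm_min order_trans by blast
  have "N1 xm \<le> N2 y / \<mu>"
    using mu by (intro le_divide_of_le_divide_below[OF \<open>\<epsilon>0 < \<mu>\<close> _ bound]) simp_all
  with \<open>g xm = y\<close> show ?thesis by blast
qed

end
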